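(* Let $\alpha$ be a graph function on a strongly connected digraph $G$, with heights $y$ and levels $x$, and let $v$ be a vertex with $y_v>\min_u y_u$. Let $x_U=\max\{x_u: y_u<y_v\}$ and $U=\{u: y_u<y_v,\ x_u=x_U\}$. Then there is a vertex $u'\in U$ and an edge $(u',v')$ of $G$ with $v'\notin U$, $\alpha^R_{u'v'}\ge x_U$, and $y_{v'}\ge y_v$.
   Context: $G$ is a strongly connected directed graph (self-loops allowed); $u\to v$ means $(u,v)$ is an edge. A graph function assigns a real weight $\alpha_{uv}$ to each edge. $\alpha_v^{\text{in}}=\max_{u\to v}\alpha_{uv}$, $\alpha_v^{\text{out}}=\max_{v\to w}\alpha_{vw}$, $\rho^R_v=\max\{0,\alpha_v^{\text{out}}-\alpha_v^{\text{in}}\}$. A raising operation at $v$: if $\rho^R_v>0$ add $\rho^R_v/2$ to each incoming edge weight $\alpha_{uv}$ ($u\ne v$) and subtract it from each outgoing $\alpha_{vw}$ ($w\neq v$); otherwise do nothing. Starting from $\alpha$, for any infinite sequence of raising operations in which every vertex occurs infinitely often, the cumulative amount by which each vertex has been raised converges to a limit vector $r^*$ independent of the sequence, and the graph functions converge to the raising-balanced graph function $\alpha^R_{uv}=\alpha_{uv}+r^*_v-r^*_u$. Heights: $y_v=-r^*_v$. Levels: $x_v=\max_{u\to v}\alpha^R_{uv}$. *)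

theory Defs
  imports Complex_Main
begin

text \<open>A graph function is a map alpha :: 'v \<Rightarrow> 'v \<Rightarrow> real, of which only the values on edges matter.\<close>

definition strongly_connected :: "'v set \<Rightarrow> ('v \<times> 'v) set \<Rightarrow> bool" where
  "strongly_connected V E \<longleftrightarrow> finite V \<and> V \<noteq> {} \<and> E \<subseteq> V \<times> V \<and>
     (\<forall>a\<in>V. \<forall>b\<in>V. (a, b) \<in> E\<^sup>+)"

definition alpha_in :: "('v \<times> 'v) set \<Rightarrow> ('v \<Rightarrow> 'v \<Rightarrow> real) \<Rightarrow> 'v \<Rightarrow> real" where
  "alpha_in E \<alpha> v = Max {\<alpha> u v | u. (u, v) \<in> E}"

definition alpha_out :: "('v \<times> 'v) set \<Rightarrow> ('v \<Rightarrow> 'v \<Rightarrow> real) \<Rightarrow> 'v \<Rightarrow> real" where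
  "alpha_out E \<alpha> v = Max {\<alpha> v w | w. (v, w) \<in> E}"

definition rhoR :: "('v \<times> 'v) set \<Rightarrow> ('v \<Rightarrow> 'v \<Rightarrow> real) \<Rightarrow> 'v \<Rightarrow> real" where
  "rhoR E \<alpha> v = max 0 (alpha_out E \<alpha> v - alpha_in E \<alpha> v)"

definition raise_op :: "('v \<times> 'v) set \<Rightarrow> ('v \<Rightarrow> 'v \<Rightarrow> real) \<Rightarrow> 'v \<Rightarrow> ('v \<Rightarrow> 'v \<Rightarrow> real)" where
  "raise_op E \<alpha> v = (\<lambda>a b. \<alpha> a b
      + (if b = v \<and> a \<noteq> v then rhoR E \<alpha> v / 2 else 0)
      - (if a = v \<and> b \<noteq> v then rhoR E \<alpha> v / 2 else 0))"

text \<open>Running a sequence of raising operations sigma from alpha: the current graph function and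
  the cumulative amount by which each vertex has been raised so far.\<close>
fun raise_iter :: "('v \<times> 'v) set \<Rightarrow> ('v \<Rightarrow> 'v \<Rightarrow> real) \<Rightarrow> (nat \<Rightarrow> 'v) \<Rightarrow> nat
      \<Rightarrow> ('v \<Rightarrow> 'v \<Rightarrow> real) \<times> ('v \<Rightarrow> real)" where
  "raise_iter E \<alpha> \<sigma> 0 = (\<alpha>, (\<lambda>_. 0))"
| "raise_iter E \<alpha> \<sigma> (Suc n) =
     (let (\<beta>, R) = raise_iter E \<alpha> \<sigma> n; v = \<sigma> n
      in (raise_op E \<beta> v, R(v := R v + rhoR E \<beta> v / 2)))"

definition fair_seq :: "'v set \<Rightarrow> (nat \<Rightarrow> 'v) \<Rightarrow> bool" where
  "fair_seq V \<sigma> \<longleftrightarrow> (\<forall>n. \<sigma> n \<in> V) \<and> (\<forall>v\<in>V. \<forall>n. \<exists>m\<ge>n. \<sigma> m = v)"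

definition is_raise_limit :: "'v set \<Rightarrow> ('v \<times> 'v) set \<Rightarrow> ('v \<Rightarrow> 'v \<Rightarrow> real) \<Rightarrow> ('v \<Rightarrow> real) \<Rightarrow> bool" where
  "is_raise_limit V E \<alpha> r \<longleftrightarrow>
     (\<forall>\<sigma>. fair_seq V \<sigma> \<longrightarrow> (\<forall>u\<in>V. (\<lambda>n. snd (raise_iter E \<alpha> \<sigma> n) u) \<longlonglongrightarrow> r u))"

definition balancedR :: "('v \<Rightarrow> 'v \<Rightarrow> real) \<Rightarrow> ('v \<Rightarrow> real) \<Rightarrow> 'v \<Rightarrow> 'v \<Rightarrow> real" where
  "balancedR \<alpha> r = (\<lambda>a b. \<alpha> a b + r b - r a)"

definition heights :: "('v \<Rightarrow> real) \<Rightarrow> 'v \<Rightarrow> real" where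
  "heights r = (\<lambda>u. - r u)"

definition levels :: "('v \<times> 'v) set \<Rightarrow> ('v \<Rightarrow> 'v \<Rightarrow> real) \<Rightarrow> ('v \<Rightarrow> real) \<Rightarrow> 'v \<Rightarrow> real" where
  "levels E \<alpha> r = (\<lambda>v. Max {balancedR \<alpha> r u v | u. (u, v) \<in> E})"

end

theory Submission imports Defs begin

text \<open>Call a graph function balanced when at every vertex the heaviest out-edge is no heavier
  than the heaviest in-edge. The limit \<open>r\<^sup>*\<close> is the least nonnegative potential whose
  function \<open>\<alpha>\<^sup>R\<close> is balanced: no raising step ever overshoots such a potential,
  and a fair sequence of steps leaves no imbalance in the limit.
  Suppose no edge of weight \<open>\<ge> x\<^sub>U\<close> left \<open>U\<close>. Inside \<open>U\<close> the heavy edges (weight \<open>\<ge> x\<^sub>U\<close>)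
  then have a terminal strongly connected piece \<open>A\<close>, and lowering the potential on \<open>A\<close> by a
  small \<open>\<epsilon>\<close> keeps it balanced: only edges entering \<open>A\<close> lose weight, and every vertex of \<open>A\<close>
  with a heavy out-edge still has a heavy in-edge from inside \<open>A\<close>. This contradicts minimality.
  The head of the exit edge is not below \<open>v\<close>, since otherwise its level would put it in \<open>U\<close>.\<close>

definition raise_balanced :: "'v set \<Rightarrow> ('v \<times> 'v) set \<Rightarrow> ('v \<Rightarrow> 'v \<Rightarrow> real) \<Rightarrow> bool" where
  "raise_balanced V E \<beta> \<longleftrightarrow> (\<forall>w\<in>V. alpha_out E \<beta> w \<le> alpha_in E \<beta> w)"

lemma strongly_connected_neighbours:
  assumes "strongly_connected V E" "v \<in> V"
  shows "finite {w. (v, w) \<in> E}" "{w. (v, w) \<in> E} \<noteq> {}"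
    and "finite {u. (u, v) \<in> E}" "{u. (u, v) \<in> E} \<noteq> {}"
proof -
  have fV: "finite V" and EV: "E \<subseteq> V \<times> V" and cyc: "(v, v) \<in> E\<^sup>+"
    using assms by (auto simp: strongly_connected_def)
  show "finite {w. (v, w) \<in> E}" "finite {u. (u, v) \<in> E}"
    using EV by (auto intro: finite_subset[OF _ fV])
  from cyc obtain w where "(v, w) \<in> E" by (meson converse_tranclE)
  then show "{w. (v, w) \<in> E} \<noteq> {}" by auto
  from cyc obtain u where "(u, v) \<in> E" by (meson tranclE)
  then show "{u. (u, v) \<in> E} \<noteq> {}" by auto
qed

lemma alpha_in_eq_Max_image: "alpha_in E \<beta> v = Max ((\<lambda>u. \<beta> u v) ` {u. (u, v) \<in> E})"
  unfolding alpha_in_def by (rule arg_cong[where f = Max]) auto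

lemma alpha_out_eq_Max_image: "alpha_out E \<beta> v = Max ((\<lambda>w. \<beta> v w) ` {w. (v, w) \<in> E})"
  unfolding alpha_out_def by (rule arg_cong[where f = Max]) auto

lemma alpha_in_ge:
  assumes "strongly_connected V E" "(u, v) \<in> E"
  shows "\<beta> u v \<le> alpha_in E \<beta> v"
proof -
  have "v \<in> V" using assms by (auto simp: strongly_connected_def)
  then show ?thesis
    using strongly_connected_neighbours[OF assms(1)] assms(2)
    unfolding alpha_in_eq_Max_image by (intro Max_ge) auto
qed

lemma alpha_out_ge:
  assumes "strongly_connected V E" "(v, w) \<in> E"
  shows "\<beta> v w \<le> alpha_out E \<beta> v"
proof -
  have "v \<in> V" using assms by (auto simp: strongly_connected_def)
  then show ?thesis
    using strongly_connected_neighbours[OF assms(1)] assms(2)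
    unfolding alpha_out_eq_Max_image by (intro Max_ge) auto
qed

lemma alpha_in_attained:
  assumes "strongly_connected V E" "v \<in> V"
  obtains u where "(u, v) \<in> E" "alpha_in E \<beta> v = \<beta> u v"
proof -
  have "alpha_in E \<beta> v \<in> (\<lambda>u. \<beta> u v) ` {u. (u, v) \<in> E}"
    unfolding alpha_in_eq_Max_image using strongly_connected_neighbours[OF assms]
    by (intro Max_in) auto
  then show ?thesis using that by auto
qed

lemma alpha_out_attained:
  assumes "strongly_connected V E" "v \<in> V"
  obtains w where "(v, w) \<in> E" "alpha_out E \<beta> v = \<beta> v w"
proof -
  have "alpha_out E \<beta> v \<in> (\<lambda>w. \<beta> v w) ` {w. (v, w) \<in> E}"
    unfolding alpha_out_eq_Max_image using strongly_connected_neighbours[OF assms]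
    by (intro Max_in) auto
  then show ?thesis using that by auto
qed

lemma raise_op_balancedR:
  "raise_op E (balancedR \<alpha> R) v = balancedR \<alpha> (R(v := R v + rhoR E (balancedR \<alpha> R) v / 2))"
  by (auto simp: raise_op_def balancedR_def fun_eq_iff)

lemma raise_iter_fst: "fst (raise_iter E \<alpha> \<sigma> n) = balancedR \<alpha> (snd (raise_iter E \<alpha> \<sigma> n))"
proof (induction n)
  case 0
  then show ?case by (simp add: balancedR_def)
next
  case (Suc n)
  then show ?case
    by (cases "raise_iter E \<alpha> \<sigma> n")
      (simp only: raise_iter.simps(2) Let_def prod.case fst_conv snd_conv raise_op_balancedR)
qed

lemma raise_iter_snd_Suc:
  "snd (raise_iter E \<alpha> \<sigma> (Suc n)) = (let R = snd (raise_iter E \<alpha> \<sigma> n); v = \<sigma> n in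
     R(v := R v + rhoR E (balancedR \<alpha> R) v / 2))"
  using raise_iter_fst[of E \<alpha> \<sigma> n] by (cases "raise_iter E \<alpha> \<sigma> n") (simp add: Let_def)

lemma raise_iter_snd_nonneg: "0 \<le> snd (raise_iter E \<alpha> \<sigma> n) w"
proof (induction n arbitrary: w)
  case 0
  then show ?case by simp
next
  case (Suc n)
  then show ?case
    by (auto simp: raise_iter_snd_Suc Let_def rhoR_def simp del: raise_iter.simps)
qed

lemma raise_iter_snd_le_balanced:
  assumes sc: "strongly_connected V E" and \<sigma>V: "\<forall>n. \<sigma> n \<in> V"
    and p_nonneg: "\<forall>w\<in>V. 0 \<le> p w" and p_bal: "raise_balanced V E (balancedR \<alpha> p)"
  shows "\<forall>w\<in>V. snd (raise_iter E \<alpha> \<sigma> n) w \<le> p w"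
proof (induction n)
  case 0
  then show ?case using p_nonneg by simp
next
  case (Suc n)
  define R where "R = snd (raise_iter E \<alpha> \<sigma> n)"
  define v where "v = \<sigma> n"
  define q where "q = p v - R v"
  define \<beta> where "\<beta> = balancedR \<alpha> R"
  define \<gamma> where "\<gamma> = balancedR \<alpha> p"
  have vV: "v \<in> V" using \<sigma>V by (simp add: v_def)
  have EV: "E \<subseteq> V \<times> V" using sc by (simp add: strongly_connected_def)
  \<comment> \<open>Relative to \<open>\<gamma>\<close>, the in-edges of \<open>v\<close> lose at most \<open>q\<close> and its out-edges gain at most \<open>q\<close>.\<close>
  have "alpha_in E \<gamma> v - q \<le> alpha_in E \<beta> v"
  proof -
    obtain a where a: "(a, v) \<in> E" "alpha_in E \<gamma> v = \<gamma> a v"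
      using alpha_in_attained[OF sc vV] .
    have "\<gamma> a v - q \<le> \<beta> a v"
      using Suc a(1) EV unfolding \<gamma>_def \<beta>_def balancedR_def q_def R_def by auto
    also have "\<dots> \<le> alpha_in E \<beta> v" by (rule alpha_in_ge[OF sc a(1)])
    finally show ?thesis using a(2) by simp
  qed
  moreover have "alpha_out E \<beta> v \<le> alpha_out E \<gamma> v + q"
  proof -
    obtain b where b: "(v, b) \<in> E" "alpha_out E \<beta> v = \<beta> v b"
      using alpha_out_attained[OF sc vV] .
    have "\<beta> v b \<le> \<gamma> v b + q"
      using Suc b(1) EV unfolding \<gamma>_def \<beta>_def balancedR_def q_def R_def by auto
    also have "\<dots> \<le> alpha_out E \<gamma> v + q" using alpha_out_ge[OF sc b(1)] by simp
    finally show ?thesis using b(2) by simp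
  qed
  moreover have "alpha_out E \<gamma> v \<le> alpha_in E \<gamma> v"
    using p_bal vV by (simp add: raise_balanced_def \<gamma>_def)
  moreover have "0 \<le> q" using Suc vV by (simp add: q_def R_def)
  ultimately have "rhoR E \<beta> v \<le> 2 * q" by (simp add: rhoR_def)
  then have "R v + rhoR E \<beta> v / 2 \<le> p v" by (simp add: q_def)
  then show ?case
    using Suc by (auto simp: raise_iter_snd_Suc Let_def R_def[symmetric] v_def[symmetric]
        \<beta>_def[symmetric] simp del: raise_iter.simps)
qed

lemma fair_seq_exists:
  assumes "finite V" "V \<noteq> {}"
  obtains \<sigma> where "fair_seq V \<sigma>"
proof -
  obtain xs where xs: "set xs = V" using finite_list[OF assms(1)] by blast
  have len: "0 < length xs" using xs assms(2) by auto
  define \<sigma> where "\<sigma> n = xs ! (n mod length xs)" for n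
  have "fair_seq V \<sigma>" unfolding fair_seq_def
  proof (intro conjI allI ballI)
    fix n
    show "\<sigma> n \<in> V" using len xs by (auto simp: \<sigma>_def)
  next
    fix v n assume "v \<in> V"
    then obtain i where i: "i < length xs" "xs ! i = v" using xs by (metis in_set_conv_nth)
    have "n \<le> n * length xs + i" using len by (cases "length xs") auto
    moreover have "\<sigma> (n * length xs + i) = v" using i by (simp add: \<sigma>_def)
    ultimately show "\<exists>m\<ge>n. \<sigma> m = v" by blast
  qed
  then show ?thesis by (rule that)
qed

lemma tendsto_Max_image:
  fixes F :: "nat \<Rightarrow> 'i \<Rightarrow> real"
  assumes "finite I" "I \<noteq> {}" "\<forall>i\<in>I. (\<lambda>n. F n i) \<longlonglongrightarrow> G i"
  shows "(\<lambda>n. Max (F n ` I)) \<longlonglongrightarrow> Max (G ` I)"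
  using assms by (induction I rule: finite_ne_induct) (simp_all add: tendsto_max)

lemma tendsto_rhoR_balancedR:
  assumes sc: "strongly_connected V E" and conv: "\<forall>u\<in>V. (\<lambda>n. R n u) \<longlonglongrightarrow> r u"
    and wV: "w \<in> V"
  shows "(\<lambda>n. rhoR E (balancedR \<alpha> (R n)) w) \<longlonglongrightarrow> rhoR E (balancedR \<alpha> r) w"
proof -
  have EV: "E \<subseteq> V \<times> V" using sc by (simp add: strongly_connected_def)
  have edge_conv: "(\<lambda>n. balancedR \<alpha> (R n) a b) \<longlonglongrightarrow> balancedR \<alpha> r a b"
    if "(a, b) \<in> E" for a b
    using that EV unfolding balancedR_def by (intro tendsto_intros) (use conv in auto)
  have "(\<lambda>n. alpha_out E (balancedR \<alpha> (R n)) w) \<longlonglongrightarrow> alpha_out E (balancedR \<alpha> r) w"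
    unfolding alpha_out_eq_Max_image
    by (rule tendsto_Max_image) (use strongly_connected_neighbours[OF sc wV] edge_conv in auto)
  moreover have "(\<lambda>n. alpha_in E (balancedR \<alpha> (R n)) w) \<longlonglongrightarrow> alpha_in E (balancedR \<alpha> r) w"
    unfolding alpha_in_eq_Max_image
    by (rule tendsto_Max_image) (use strongly_connected_neighbours[OF sc wV] edge_conv in auto)
  ultimately show ?thesis unfolding rhoR_def by (intro tendsto_intros)
qed

lemma raise_limit_fair_seq:
  assumes sc: "strongly_connected V E" and lim: "is_raise_limit V E \<alpha> r"
  obtains \<sigma> where "fair_seq V \<sigma>" "\<forall>u\<in>V. (\<lambda>n. snd (raise_iter E \<alpha> \<sigma> n) u) \<longlonglongrightarrow> r u"
proof -
  have "finite V" "V \<noteq> {}" using sc by (auto simp: strongly_connected_def)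
  then obtain \<sigma> where "fair_seq V \<sigma>" by (rule fair_seq_exists)
  then show ?thesis using lim that by (auto simp: is_raise_limit_def)
qed

lemma raise_limit_nonneg:
  assumes "strongly_connected V E" "is_raise_limit V E \<alpha> r" "w \<in> V"
  shows "0 \<le> r w"
proof -
  obtain \<sigma> where "\<forall>u\<in>V. (\<lambda>n. snd (raise_iter E \<alpha> \<sigma> n) u) \<longlonglongrightarrow> r u"
    using raise_limit_fair_seq[OF assms(1,2)] .
  then show ?thesis
    using assms(3) by (auto intro: LIMSEQ_le_const raise_iter_snd_nonneg)
qed

lemma raise_limit_le_balanced:
  assumes sc: "strongly_connected V E" and lim: "is_raise_limit V E \<alpha> r"
    and "\<forall>w\<in>V. 0 \<le> p w" "raise_balanced V E (balancedR \<alpha> p)" and wV: "w \<in> V"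
  shows "r w \<le> p w"
proof -
  obtain \<sigma> where fair: "fair_seq V \<sigma>"
    and conv: "\<forall>u\<in>V. (\<lambda>n. snd (raise_iter E \<alpha> \<sigma> n) u) \<longlonglongrightarrow> r u"
    using raise_limit_fair_seq[OF sc lim] .
  have "\<forall>n. \<sigma> n \<in> V" using fair by (simp add: fair_seq_def)
  then have "\<forall>n. snd (raise_iter E \<alpha> \<sigma> n) w \<le> p w"
    using raise_iter_snd_le_balanced[OF sc _ assms(3,4)] wV by blast
  then show ?thesis using conv wV by (auto intro: LIMSEQ_le_const2)
qed

lemma raise_limit_balanced:
  assumes sc: "strongly_connected V E" and lim: "is_raise_limit V E \<alpha> r"
  shows "raise_balanced V E (balancedR \<alpha> r)"
  unfolding raise_balanced_def
proof (intro ballI leI notI)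
  fix w assume wV: "w \<in> V" and "alpha_in E (balancedR \<alpha> r) w < alpha_out E (balancedR \<alpha> r) w"
  then have \<rho>_pos: "0 < rhoR E (balancedR \<alpha> r) w" by (simp add: rhoR_def)
  define \<rho> where "\<rho> = rhoR E (balancedR \<alpha> r) w"
  obtain \<sigma> where fair: "fair_seq V \<sigma>"
    and conv: "\<forall>u\<in>V. (\<lambda>n. snd (raise_iter E \<alpha> \<sigma> n) u) \<longlonglongrightarrow> r u"
    using raise_limit_fair_seq[OF sc lim] .
  define R where "R n = snd (raise_iter E \<alpha> \<sigma> n)" for n
  \<comment> \<open>Each visit of \<open>w\<close> raises it by half the current imbalance, which tends to \<open>\<rho>\<close>,
    while the increments of the convergent sequence \<open>R n w\<close> tend to \<open>0\<close>.\<close>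
  have "(\<lambda>n. rhoR E (balancedR \<alpha> (R n)) w) \<longlonglongrightarrow> \<rho>"
    using tendsto_rhoR_balancedR[OF sc _ wV] conv by (simp add: R_def \<rho>_def)
  then have "\<forall>\<^sub>F n in sequentially. \<rho> / 2 < rhoR E (balancedR \<alpha> (R n)) w"
    using \<rho>_pos by (intro order_tendstoD(1)) (auto simp: \<rho>_def)
  moreover have "(\<lambda>n. R (Suc n) w - R n w) \<longlonglongrightarrow> 0"
    using tendsto_diff[OF LIMSEQ_Suc[of "\<lambda>n. R n w"]] conv wV by (force simp: R_def)
  then have "\<forall>\<^sub>F n in sequentially. R (Suc n) w - R n w < \<rho> / 4"
    using \<rho>_pos by (intro order_tendstoD(2)) (auto simp: \<rho>_def)
  ultimately obtain N where N: "\<And>n. N \<le> n \<Longrightarrow>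
      \<rho> / 2 < rhoR E (balancedR \<alpha> (R n)) w \<and> R (Suc n) w - R n w < \<rho> / 4"
    by (metis (no_types, lifting) eventually_conj eventually_sequentially)
  obtain m where m: "N \<le> m" "\<sigma> m = w" using fair wV unfolding fair_seq_def by blast
  have "R (Suc m) w = R m w + rhoR E (balancedR \<alpha> (R m)) w / 2"
    using m(2) by (simp add: R_def raise_iter_snd_Suc Let_def del: raise_iter.simps)
  then show False using N[OF m(1)] by simp
qed

lemma exists_terminal_strong_component:
  assumes "finite U" "U \<noteq> {}" "H `` U \<subseteq> U"
  obtains A where "A \<subseteq> U" "A \<noteq> {}" "H `` A \<subseteq> A" "\<forall>a\<in>A. \<forall>b\<in>A. (a, b) \<in> H\<^sup>*"
proof -
  define reach where "reach a = H\<^sup>* `` {a}" for a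
  have reach_sub: "reach a \<subseteq> U" if "a \<in> U" for a
    using Image_closed_trancl[OF assms(3)] that by (auto simp: reach_def)
  \<comment> \<open>A vertex with a smallest reachable set reaches back to itself from everywhere it reaches.\<close>
  define a0 where "a0 = arg_min_on (\<lambda>a. card (reach a)) U"
  have a0U: "a0 \<in> U" and a0_min: "\<And>a. a \<in> U \<Longrightarrow> card (reach a0) \<le> card (reach a)"
    using arg_min_if_finite[OF assms(1,2), of "\<lambda>a. card (reach a)"] by (auto simp: a0_def not_less)
  define A where "A = reach a0"
  have finA: "finite A" using reach_sub[OF a0U] assms(1) by (auto simp: A_def intro: finite_subset)
  have closed: "H `` A \<subseteq> A" by (auto simp: A_def reach_def intro: rtrancl_into_rtrancl)
  have "reach b = A" if "b \<in> A" for b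
  proof (rule card_subset_eq[OF finA])
    show "reach b \<subseteq> A" using that by (auto simp: A_def reach_def intro: rtrancl_trans)
    then have "card (reach b) \<le> card A" by (rule card_mono[OF finA])
    moreover have "card A \<le> card (reach b)"
      using a0_min[of b] reach_sub[OF a0U] that by (auto simp: A_def)
    ultimately show "card (reach b) = card A" by (rule antisym)
  qed
  then have "\<forall>a\<in>A. \<forall>b\<in>A. (a, b) \<in> H\<^sup>*" by (auto simp: reach_def)
  moreover have "a0 \<in> A" by (simp add: A_def reach_def)
  ultimately show ?thesis using that reach_sub[OF a0U] closed by (auto simp: A_def)
qed

lemma finite_positive_lower_bound:
  fixes S :: "'a :: linordered_semidom set"
  assumes "finite S" "\<forall>s\<in>S. 0 < s"
  obtains \<epsilon> where "0 < \<epsilon>" "\<forall>s\<in>S. \<epsilon> \<le> s"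
proof
  show "0 < Min (insert 1 S)" using assms by simp
  show "\<forall>s\<in>S. Min (insert 1 S) \<le> s" using assms(1) by simp
qed

lemma raise_balanced_lower_set:
  fixes \<beta> :: "'v \<Rightarrow> 'v \<Rightarrow> real"
  assumes sc: "strongly_connected V E" and bal: "raise_balanced V E \<beta>"
    and level: "\<forall>a\<in>A. alpha_in E \<beta> a = c"
    and closed: "\<And>a b. a \<in> A \<Longrightarrow> (a, b) \<in> E \<Longrightarrow> c \<le> \<beta> a b \<Longrightarrow> b \<in> A"
    and fed: "\<And>a b. a \<in> A \<Longrightarrow> (a, b) \<in> E \<Longrightarrow> c \<le> \<beta> a b \<Longrightarrow> \<exists>a'\<in>A. (a', a) \<in> E \<and> c \<le> \<beta> a' a"
    and gap: "\<And>a b. a \<in> A \<Longrightarrow> (a, b) \<in> E \<Longrightarrow> \<beta> a b < c \<Longrightarrow> 2 * \<epsilon> \<le> c - \<beta> a b"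
    and \<epsilon>_nonneg: "0 \<le> \<epsilon>"
  shows "raise_balanced V E (\<lambda>a b. \<beta> a b + (if a \<in> A then \<epsilon> else 0) - (if b \<in> A then \<epsilon> else 0))"
    (is "raise_balanced V E ?\<beta>'")
  unfolding raise_balanced_def
proof
  fix w assume wV: "w \<in> V"
  obtain b where b: "(w, b) \<in> E" "alpha_out E ?\<beta>' w = ?\<beta>' w b"
    using alpha_out_attained[OF sc wV] .
  obtain a where a: "(a, w) \<in> E" "alpha_in E \<beta> w = \<beta> a w"
    using alpha_in_attained[OF sc wV] .
  have in_a: "?\<beta>' a w \<le> alpha_in E ?\<beta>' w" by (rule alpha_in_ge[OF sc a(1)])
  have out_b: "\<beta> w b \<le> alpha_in E \<beta> w"
    using alpha_out_ge[OF sc b(1), of \<beta>] bal wV by (force simp: raise_balanced_def)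
  show "alpha_out E ?\<beta>' w \<le> alpha_in E ?\<beta>' w"
  proof (cases "w \<in> A")
    case False
    then show ?thesis using a b in_a out_b \<epsilon>_nonneg by (auto split: if_splits)
  next
    case wA: True
    have in_c: "alpha_in E \<beta> w = c" using level wA by simp
    show ?thesis
    proof (cases "\<exists>a'\<in>A. (a', w) \<in> E \<and> c \<le> \<beta> a' w")
      case True
      then obtain a' where a': "a' \<in> A" "(a', w) \<in> E" "c \<le> \<beta> a' w" by blast
      have "c \<le> alpha_in E ?\<beta>' w" using alpha_in_ge[OF sc a'(2), of ?\<beta>'] a' wA by simp
      moreover have "?\<beta>' w b \<le> c"
      proof (cases "b \<in> A")
        case True
        then show ?thesis using wA out_b in_c by simp
      next
        case False
        then have "\<beta> w b < c" using closed[OF wA b(1)] by force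
        then show ?thesis using gap[OF wA b(1)] False wA \<epsilon>_nonneg by simp
      qed
      ultimately show ?thesis using b(2) by linarith
    next
      case False
      then have "\<beta> w b < c" using fed[OF wA b(1)] by force
      then have "?\<beta>' w b \<le> c - \<epsilon>" using gap[OF wA b(1)] wA by auto
      moreover have "c - \<epsilon> \<le> ?\<beta>' a w" using a(2) in_c wA \<epsilon>_nonneg by auto
      ultimately show ?thesis using b(2) in_a by linarith
    qed
  qed
qed

lemma raise_limit_level_set_has_exit:
  assumes sc: "strongly_connected V E" and lim: "is_raise_limit V E \<alpha> r"
    and UV: "U \<subseteq> V" and U_ne: "U \<noteq> {}" and r_pos: "\<forall>u\<in>U. 0 < r u"
    and level: "\<forall>u\<in>U. alpha_in E (balancedR \<alpha> r) u = c"
  shows "\<exists>u\<in>U. \<exists>b. (u, b) \<in> E \<and> b \<notin> U \<and> c \<le> balancedR \<alpha> r u b"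
proof (rule ccontr)
  assume no_exit: "\<not> ?thesis"
  define \<beta> where "\<beta> = balancedR \<alpha> r"
  define H where "H = {(a, b) \<in> E. a \<in> U \<and> c \<le> \<beta> a b}"
  have finV: "finite V" and EV: "E \<subseteq> V \<times> V" using sc by (auto simp: strongly_connected_def)
  have "H `` U \<subseteq> U" using no_exit by (auto simp: H_def \<beta>_def)
  then obtain A where AU: "A \<subseteq> U" and A_ne: "A \<noteq> {}" and closed: "H `` A \<subseteq> A"
    and strong: "\<forall>a\<in>A. \<forall>b\<in>A. (a, b) \<in> H\<^sup>*"
    using exists_terminal_strong_component[of U H] finite_subset[OF UV finV] U_ne by blast
  have closed_E: "b \<in> A" if "a \<in> A" "(a, b) \<in> E" "c \<le> \<beta> a b" for a b
  proof -
    have "(a, b) \<in> H" using that AU by (auto simp: H_def)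
    then show ?thesis using closed that(1) by blast
  qed
  have fed: "\<exists>a'\<in>A. (a', a) \<in> E \<and> c \<le> \<beta> a' a" if "a \<in> A" "(a, b) \<in> E" "c \<le> \<beta> a b" for a b
  proof -
    have ab: "(a, b) \<in> H" using that AU by (auto simp: H_def)
    then have "(b, a) \<in> H\<^sup>*" using strong closed_E that by blast
    then have "(a, a) \<in> H\<^sup>+" using ab by (rule rtrancl_into_trancl2[rotated])
    then obtain a' where "(a, a') \<in> H\<^sup>*" "(a', a) \<in> H" by (meson tranclD2)
    moreover have "a' \<in> A"
      using Image_closed_trancl[OF closed] \<open>(a, a') \<in> H\<^sup>*\<close> that(1) by blast
    ultimately show ?thesis by (auto simp: H_def)
  qed
  define gaps where "gaps = (\<lambda>(a, b). (c - \<beta> a b) / 2) ` {(a, b) \<in> E. a \<in> A \<and> \<beta> a b < c}"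
  have "finite E" using EV finV by (meson finite_SigmaI finite_subset)
  then have "finite gaps" unfolding gaps_def by (auto intro: finite_subset[of _ E])
  moreover have "finite A" using AU UV finV by (meson finite_subset)
  ultimately have "finite (gaps \<union> r ` A)" by simp
  moreover have "\<forall>s\<in>gaps \<union> r ` A. 0 < s" using AU r_pos by (auto simp: gaps_def)
  ultimately obtain \<epsilon> where \<epsilon>_pos: "0 < \<epsilon>" and \<epsilon>_le: "\<forall>s\<in>gaps \<union> r ` A. \<epsilon> \<le> s"
    by (rule finite_positive_lower_bound)
  define p where "p w = r w - (if w \<in> A then \<epsilon> else 0)" for w
  have gap: "2 * \<epsilon> \<le> c - \<beta> a b" if "a \<in> A" "(a, b) \<in> E" "\<beta> a b < c" for a b
    using \<epsilon>_le that by (force simp: gaps_def)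
  have shift: "balancedR \<alpha> p = (\<lambda>a b. \<beta> a b + (if a \<in> A then \<epsilon> else 0) - (if b \<in> A then \<epsilon> else 0))"
    (is "_ = ?\<beta>'")
    by (simp add: fun_eq_iff balancedR_def p_def \<beta>_def)
  have "raise_balanced V E ?\<beta>'"
  proof (rule raise_balanced_lower_set[OF sc _ _ closed_E fed gap])
    show "raise_balanced V E \<beta>" unfolding \<beta>_def by (rule raise_limit_balanced[OF sc lim])
    show "\<forall>a\<in>A. alpha_in E \<beta> a = c" using level AU by (auto simp: \<beta>_def)
  qed (use \<epsilon>_pos in auto)
  then have "raise_balanced V E (balancedR \<alpha> p)" by (simp only: shift)
  moreover have "\<forall>w\<in>V. 0 \<le> p w"
    using \<epsilon>_le raise_limit_nonneg[OF sc lim] by (auto simp: p_def)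
  ultimately have "r a \<le> p a" if "a \<in> A" for a
    using raise_limit_le_balanced[OF sc lim] that AU UV by blast
  then show False using A_ne \<epsilon>_pos by (auto simp: p_def)
qed

theorem lemma7:
  fixes V :: "'v set" and E :: "('v \<times> 'v) set" and \<alpha> :: "'v \<Rightarrow> 'v \<Rightarrow> real"
    and r :: "'v \<Rightarrow> real" and v :: 'v
  assumes "strongly_connected V E"
    and "is_raise_limit V E \<alpha> r"
    and "v \<in> V"
    and "heights r v > Min (heights r ` V)"
  shows "\<exists>u'\<in>{u \<in> V. heights r u < heights r v \<and>
                 levels E \<alpha> r u = Max {levels E \<alpha> r w | w. w \<in> V \<and> heights r w < heights r v}}.
         \<exists>v'. (u', v') \<in> E
           \<and> v' \<notin> {u \<in> V. heights r u < heights r v \<and>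
                 levels E \<alpha> r u = Max {levels E \<alpha> r w | w. w \<in> V \<and> heights r w < heights r v}}
           \<and> balancedR \<alpha> r u' v' \<ge> Max {levels E \<alpha> r w | w. w \<in> V \<and> heights r w < heights r v}
           \<and> heights r v' \<ge> heights r v"
proof -
  note sc = assms(1) and lim = assms(2)
  define x where "x = levels E \<alpha> r"
  define S where "S = {w \<in> V. r v < r w}"
  define c where "c = Max (x ` S)"
  define U where "U = {u \<in> S. x u = c}"
  have x_eq: "x w = alpha_in E (balancedR \<alpha> r) w" for w
    by (simp add: x_def levels_def alpha_in_def)
  have finS: "finite S" using sc by (simp add: S_def strongly_connected_def)
  have "Min (heights r ` V) \<in> heights r ` V"
    using sc by (intro Min_in) (auto simp: strongly_connected_def)
  then have "S \<noteq> {}" using assms(4) by (auto simp: S_def heights_def)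
  then have "c \<in> x ` S" unfolding c_def using finS by (intro Max_in) auto
  then have U_ne: "U \<noteq> {}" by (auto simp: U_def)
  have UV: "U \<subseteq> V" by (auto simp: U_def S_def)
  have r_pos: "\<forall>u\<in>U. 0 < r u"
    using raise_limit_nonneg[OF sc lim assms(3)] by (auto simp: U_def S_def)
  have level: "\<forall>u\<in>U. alpha_in E (balancedR \<alpha> r) u = c" using x_eq by (simp add: U_def)
  obtain u b where u: "u \<in> U" and b: "(u, b) \<in> E" "b \<notin> U" "c \<le> balancedR \<alpha> r u b"
    using raise_limit_level_set_has_exit[OF sc lim UV U_ne r_pos level] by blast
  have "r b \<le> r v"
  proof (rule ccontr)
    assume "\<not> r b \<le> r v"
    moreover have "b \<in> V" using b(1) sc by (auto simp: strongly_connected_def)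
    ultimately have "b \<in> S" by (simp add: S_def)
    then have "x b \<le> c" using finS by (simp add: c_def)
    moreover have "balancedR \<alpha> r u b \<le> x b" using alpha_in_ge[OF sc b(1)] x_eq by simp
    ultimately show False using b(2,3) \<open>b \<in> S\<close> by (simp add: U_def)
  qed
  have levels_eq: "{levels E \<alpha> r w | w. w \<in> V \<and> heights r w < heights r v} = x ` S"
    by (auto simp: x_def S_def heights_def)
  have U_eq: "{u \<in> V. heights r u < heights r v \<and> levels E \<alpha> r u = c} = U"
    by (auto simp: U_def S_def x_def heights_def)
  show ?thesis
    unfolding levels_eq c_def[symmetric] U_eq
    using u b \<open>r b \<le> r v\<close> by (auto simp: heights_def)
qed

end
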